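(* In a Douglian pre-Hilbert $*$-category, every contraction has a codilator.
   Context: A $*$-category is a category with a choice of $f^*\colon Y\to X$ for each $f\colon X\to Y$ such that $1^*=1$, $(gf)^*=f^*g^*$, $(f^* )^*=f$; $f$ is an isometry if $f^*f=1$. A pre-Hilbert $*$-category is a $*$-category with (R1) a zero object, (R2) orthonormal biproducts of all pairs of objects (biproducts $(X,s_1,r_1,s_2,r_2)$ with $r_k=s_k^*$), (R3) an isometric kernel for every morphism, and (R4) every diagonal $\Delta\colon X\to X\oplus X$ a kernel of some morphism. Such a category is additive. For Hermitian endomorphisms $a,b$ of $A$, $a\leq b$ means $b-a=y^*y$ for some $y\colon A\to Y$. A morphism $f$ is a contraction if $f^*f\leq 1$. A morphism $f\colon A\to X$ is Douglian if for every morphism $g\colon A\to Y$ with $g^*g=f^*f$ there exists $h\colon X\to Y$ with $hf=g$; a pre-Hilbert $*$-category is Douglian if all its morphisms are Douglian. A codilation of $f\colon X\to Y$ is a cospan $(T,t_1,t_2)$ with $t_1\colon X\to T$, $t_2\colon Y\to T$ isometries and $t_2^*t_1=f$. A codilator of $f$ is a codilation $(S,s_1,s_2)$ such that for every codilation $(T,t_1,t_2)$ of $f$ there is a unique isometry $t\colon S\to T$ with $ts_1=t_1$ and $ts_2=t_2$. *)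

theory Defs
  imports Main
begin

text \<open>A (small, set-based) category with an involution.  Composition
  Comp C g f means g after f.\<close>

record ('o, 'm) starcat =
  Obj  :: "'o set"
  Arr  :: "'m set"
  Dom  :: "'m \<Rightarrow> 'o"
  Cod  :: "'m \<Rightarrow> 'o"
  Id   :: "'o \<Rightarrow> 'm"
  Comp :: "'m \<Rightarrow> 'm \<Rightarrow> 'm"
  Star :: "'m \<Rightarrow> 'm"

definition hom :: "('o, 'm) starcat \<Rightarrow> 'o \<Rightarrow> 'o \<Rightarrow> 'm set" where
  "hom C A B = {f \<in> Arr C. Dom C f = A \<and> Cod C f = B}"

definition category :: "('o, 'm) starcat \<Rightarrow> bool" where
  "category C \<longleftrightarrow>
     (\<forall>f\<in>Arr C. Dom C f \<in> Obj C \<and> Cod C f \<in> Obj C) \<and>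
     (\<forall>A\<in>Obj C. Id C A \<in> hom C A A) \<and>
     (\<forall>f\<in>Arr C. \<forall>g\<in>Arr C. Cod C f = Dom C g \<longrightarrow> Comp C g f \<in> hom C (Dom C f) (Cod C g)) \<and>
     (\<forall>f\<in>Arr C. Comp C (Id C (Cod C f)) f = f \<and> Comp C f (Id C (Dom C f)) = f) \<and>
     (\<forall>f\<in>Arr C. \<forall>g\<in>Arr C. \<forall>h\<in>Arr C. Cod C f = Dom C g \<longrightarrow> Cod C g = Dom C h \<longrightarrow>
        Comp C h (Comp C g f) = Comp C (Comp C h g) f)"

definition star_category :: "('o, 'm) starcat \<Rightarrow> bool" where
  "star_category C \<longleftrightarrow> category C \<and>
     (\<forall>f\<in>Arr C. Star C f \<in> hom C (Cod C f) (Dom C f)) \<and>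
     (\<forall>A\<in>Obj C. Star C (Id C A) = Id C A) \<and>
     (\<forall>f\<in>Arr C. \<forall>g\<in>Arr C. Cod C f = Dom C g \<longrightarrow>
        Star C (Comp C g f) = Comp C (Star C f) (Star C g)) \<and>
     (\<forall>f\<in>Arr C. Star C (Star C f) = f)"

definition isometry :: "('o, 'm) starcat \<Rightarrow> 'm \<Rightarrow> bool" where
  "isometry C f \<longleftrightarrow> f \<in> Arr C \<and> Comp C (Star C f) f = Id C (Dom C f)"

definition zero_object :: "('o, 'm) starcat \<Rightarrow> 'o \<Rightarrow> bool" where
  "zero_object C Z \<longleftrightarrow> Z \<in> Obj C \<and>
     (\<forall>A\<in>Obj C. (\<exists>!f. f \<in> hom C Z A) \<and> (\<exists>!f. f \<in> hom C A Z))"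

definition zero_map :: "('o, 'm) starcat \<Rightarrow> 'o \<Rightarrow> 'o \<Rightarrow> 'm \<Rightarrow> bool" where
  "zero_map C A B f \<longleftrightarrow> f \<in> hom C A B \<and>
     (\<exists>Z g h. zero_object C Z \<and> g \<in> hom C A Z \<and> h \<in> hom C Z B \<and> f = Comp C h g)"

definition biproduct :: "('o, 'm) starcat \<Rightarrow> 'o \<Rightarrow> 'o \<Rightarrow> 'o \<Rightarrow> 'm \<Rightarrow> 'm \<Rightarrow> 'm \<Rightarrow> 'm \<Rightarrow> bool" where
  "biproduct C A B X s1 r1 s2 r2 \<longleftrightarrow>
     A \<in> Obj C \<and> B \<in> Obj C \<and> X \<in> Obj C \<and>
     s1 \<in> hom C A X \<and> r1 \<in> hom C X A \<and> s2 \<in> hom C B X \<and> r2 \<in> hom C X B \<and>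
     Comp C r1 s1 = Id C A \<and> Comp C r2 s2 = Id C B \<and>
     zero_map C A B (Comp C r2 s1) \<and> zero_map C B A (Comp C r1 s2) \<and>
     (\<forall>Z\<in>Obj C. \<forall>f\<in>hom C Z A. \<forall>g\<in>hom C Z B.
        \<exists>!h. h \<in> hom C Z X \<and> Comp C r1 h = f \<and> Comp C r2 h = g) \<and>
     (\<forall>Z\<in>Obj C. \<forall>f\<in>hom C A Z. \<forall>g\<in>hom C B Z.
        \<exists>!h. h \<in> hom C X Z \<and> Comp C h s1 = f \<and> Comp C h s2 = g)"

definition orthonormal_biproduct :: "('o, 'm) starcat \<Rightarrow> 'o \<Rightarrow> 'o \<Rightarrow> 'o \<Rightarrow> 'm \<Rightarrow> 'm \<Rightarrow> 'm \<Rightarrow> 'm \<Rightarrow> bool" where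
  "orthonormal_biproduct C A B X s1 r1 s2 r2 \<longleftrightarrow>
     biproduct C A B X s1 r1 s2 r2 \<and> r1 = Star C s1 \<and> r2 = Star C s2"

definition kernel :: "('o, 'm) starcat \<Rightarrow> 'm \<Rightarrow> 'm \<Rightarrow> bool" where
  "kernel C f k \<longleftrightarrow> f \<in> Arr C \<and> k \<in> Arr C \<and> Cod C k = Dom C f \<and>
     zero_map C (Dom C k) (Cod C f) (Comp C f k) \<and>
     (\<forall>g\<in>Arr C. Cod C g = Dom C f \<longrightarrow> zero_map C (Dom C g) (Cod C f) (Comp C f g) \<longrightarrow>
        (\<exists>!h. h \<in> hom C (Dom C g) (Dom C k) \<and> Comp C k h = g))"

definition pre_hilbert_star_category :: "('o, 'm) starcat \<Rightarrow> bool" where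
  "pre_hilbert_star_category C \<longleftrightarrow> star_category C \<and>
     \<comment> \<open>(R1)\<close> (\<exists>Z. zero_object C Z) \<and>
     \<comment> \<open>(R2)\<close> (\<forall>A\<in>Obj C. \<forall>B\<in>Obj C. \<exists>X s1 r1 s2 r2. orthonormal_biproduct C A B X s1 r1 s2 r2) \<and>
     \<comment> \<open>(R3)\<close> (\<forall>f\<in>Arr C. \<exists>k. kernel C f k \<and> isometry C k) \<and>
     \<comment> \<open>(R4)\<close> (\<forall>X P s1 r1 s2 r2 d. orthonormal_biproduct C X X P s1 r1 s2 r2 \<and>
                 d \<in> hom C X P \<and> Comp C r1 d = Id C X \<and> Comp C r2 d = Id C X
                 \<longrightarrow> (\<exists>f. kernel C f d))"

text \<open>The (biproduct-induced) sum of parallel morphisms: h = f + g, i.e.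
  h = \<nabla> \<circ> \<langle>f, g\<rangle> for a biproduct of Cod f with itself.\<close>
definition is_sum :: "('o, 'm) starcat \<Rightarrow> 'm \<Rightarrow> 'm \<Rightarrow> 'm \<Rightarrow> bool" where
  "is_sum C f g h \<longleftrightarrow> f \<in> Arr C \<and> g \<in> hom C (Dom C f) (Cod C f) \<and>
     (\<exists>P i1 p1 i2 p2 u n. biproduct C (Cod C f) (Cod C f) P i1 p1 i2 p2 \<and>
        u \<in> hom C (Dom C f) P \<and> Comp C p1 u = f \<and> Comp C p2 u = g \<and>
        n \<in> hom C P (Cod C f) \<and> Comp C n i1 = Id C (Cod C f) \<and> Comp C n i2 = Id C (Cod C f) \<and>
        h = Comp C n u)"

definition hermitian :: "('o, 'm) starcat \<Rightarrow> 'm \<Rightarrow> bool" where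
  "hermitian C a \<longleftrightarrow> a \<in> Arr C \<and> Dom C a = Cod C a \<and> Star C a = a"

text \<open>a \<le> b iff b - a = y* y for some y; in the additive hom-groups
  b - a = c is the same as a + c = b.\<close>
definition herm_le :: "('o, 'm) starcat \<Rightarrow> 'm \<Rightarrow> 'm \<Rightarrow> bool" where
  "herm_le C a b \<longleftrightarrow> hermitian C a \<and> hermitian C b \<and> Dom C a = Dom C b \<and>
     (\<exists>y. y \<in> Arr C \<and> Dom C y = Dom C a \<and> is_sum C a (Comp C (Star C y) y) b)"

definition contraction :: "('o, 'm) starcat \<Rightarrow> 'm \<Rightarrow> bool" where
  "contraction C f \<longleftrightarrow> f \<in> Arr C \<and>
     herm_le C (Comp C (Star C f) f) (Id C (Dom C f))"

definition douglian_morphism :: "('o, 'm) starcat \<Rightarrow> 'm \<Rightarrow> bool" where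
  "douglian_morphism C f \<longleftrightarrow> f \<in> Arr C \<and>
     (\<forall>g\<in>Arr C. Dom C g = Dom C f \<longrightarrow>
        Comp C (Star C g) g = Comp C (Star C f) f \<longrightarrow>
        (\<exists>h. h \<in> hom C (Cod C f) (Cod C g) \<and> Comp C h f = g))"

definition douglian_pre_hilbert_star_category :: "('o, 'm) starcat \<Rightarrow> bool" where
  "douglian_pre_hilbert_star_category C \<longleftrightarrow> pre_hilbert_star_category C \<and>
     (\<forall>f\<in>Arr C. douglian_morphism C f)"

definition codilation :: "('o, 'm) starcat \<Rightarrow> 'm \<Rightarrow> 'o \<Rightarrow> 'm \<Rightarrow> 'm \<Rightarrow> bool" where
  "codilation C f T t1 t2 \<longleftrightarrow> f \<in> Arr C \<and> T \<in> Obj C \<and>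
     t1 \<in> hom C (Dom C f) T \<and> t2 \<in> hom C (Cod C f) T \<and>
     isometry C t1 \<and> isometry C t2 \<and> Comp C (Star C t2) t1 = f"

definition codilator :: "('o, 'm) starcat \<Rightarrow> 'm \<Rightarrow> 'o \<Rightarrow> 'm \<Rightarrow> 'm \<Rightarrow> bool" where
  "codilator C f S s1 s2 \<longleftrightarrow> codilation C f S s1 s2 \<and>
     (\<forall>T t1 t2. codilation C f T t1 t2 \<longrightarrow>
        (\<exists>!t. t \<in> hom C S T \<and> isometry C t \<and> Comp C t s1 = t1 \<and> Comp C t s2 = t2))"

end

theory Submission
  imports Defs
begin

text \<open>A contraction \<open>f : X \<rightarrow> Y\<close> satisfies \<open>f\<^sup>* f + y\<^sup>* y = 1\<close> for some \<open>y : X \<rightarrow> D\<close>, so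
  \<open>\<langle>f, y\<rangle> : X \<rightarrow> Y \<oplus> D\<close> together with the inclusion of \<open>Y\<close> is a codilation.  Cutting it down
  to the image of its copairing \<open>X \<oplus> Y \<rightarrow> Y \<oplus> D\<close> (the kernel of \<open>k\<^sup>*\<close>, for \<open>k\<close> a kernel of the
  adjoint) yields a codilation \<open>(S, s\<^sub>1, s\<^sub>2)\<close> whose copairing \<open>m : X \<oplus> Y \<rightarrow> S\<close> is epic; epicity
  rests on diagonals being kernels.  For any codilation \<open>(T, t\<^sub>1, t\<^sub>2)\<close> with copairing \<open>n\<close>, both
  \<open>m\<^sup>* m\<close> and \<open>n\<^sup>* n\<close> equal the matrix \<open>[1, f\<^sup>*; f, 1]\<close>, so the Douglas property yields \<open>h\<close> with
  \<open>h m = n\<close>; since \<open>m\<close> is epic, \<open>h\<close> is an isometry and is unique.\<close>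

definition epi :: "('o, 'm) starcat \<Rightarrow> 'm \<Rightarrow> bool" where
  "epi C e \<longleftrightarrow> e \<in> Arr C \<and>
     (\<forall>B u v. u \<in> hom C (Cod C e) B \<longrightarrow> v \<in> hom C (Cod C e) B \<longrightarrow>
        Comp C u e = Comp C v e \<longrightarrow> u = v)"

locale star_cat =
  fixes C :: "('o, 'm) starcat"
  assumes star_category: "star_category C"
begin

lemma category: "category C"
  using star_category unfolding star_category_def by blast

lemma in_homD: "f \<in> hom C A B \<Longrightarrow> f \<in> Arr C \<and> Dom C f = A \<and> Cod C f = B"
  unfolding hom_def by auto

lemma in_hom_objs: "f \<in> hom C A B \<Longrightarrow> A \<in> Obj C \<and> B \<in> Obj C"
  using category unfolding category_def hom_def by auto

lemma comp_in_hom: "f \<in> hom C A B \<Longrightarrow> g \<in> hom C B D \<Longrightarrow> Comp C g f \<in> hom C A D"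
  using category unfolding category_def hom_def by auto

lemma id_in_hom: "A \<in> Obj C \<Longrightarrow> Id C A \<in> hom C A A"
  using category unfolding category_def by auto

lemma star_in_hom: "f \<in> hom C A B \<Longrightarrow> Star C f \<in> hom C B A"
  using star_category unfolding star_category_def hom_def by auto

lemma comp_arr: "f \<in> Arr C \<Longrightarrow> g \<in> Arr C \<Longrightarrow> Cod C f = Dom C g \<Longrightarrow> Comp C g f \<in> Arr C"
  and dom_comp: "f \<in> Arr C \<Longrightarrow> g \<in> Arr C \<Longrightarrow> Cod C f = Dom C g \<Longrightarrow> Dom C (Comp C g f) = Dom C f"
  and cod_comp: "f \<in> Arr C \<Longrightarrow> g \<in> Arr C \<Longrightarrow> Cod C f = Dom C g \<Longrightarrow> Cod C (Comp C g f) = Cod C g"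
  using category unfolding category_def hom_def by auto

lemma comp_assoc: "f \<in> Arr C \<Longrightarrow> g \<in> Arr C \<Longrightarrow> h \<in> Arr C \<Longrightarrow> Cod C f = Dom C g \<Longrightarrow>
    Cod C g = Dom C h \<Longrightarrow> Comp C (Comp C h g) f = Comp C h (Comp C g f)"
  using category unfolding category_def by auto

lemma comp_id_left: "f \<in> Arr C \<Longrightarrow> Cod C f = B \<Longrightarrow> Comp C (Id C B) f = f"
  and comp_id_right: "f \<in> Arr C \<Longrightarrow> Dom C f = A \<Longrightarrow> Comp C f (Id C A) = f"
  using category unfolding category_def by auto

lemma star_arr: "f \<in> Arr C \<Longrightarrow> Star C f \<in> Arr C"
  and dom_star: "f \<in> Arr C \<Longrightarrow> Dom C (Star C f) = Cod C f"
  and cod_star: "f \<in> Arr C \<Longrightarrow> Cod C (Star C f) = Dom C f"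
  and star_star: "f \<in> Arr C \<Longrightarrow> Star C (Star C f) = f"
  and star_comp: "f \<in> Arr C \<Longrightarrow> g \<in> Arr C \<Longrightarrow> Cod C f = Dom C g \<Longrightarrow>
    Star C (Comp C g f) = Comp C (Star C f) (Star C g)"
  using star_category unfolding star_category_def hom_def by auto


lemma comp_eq_comp_right:
  assumes "Comp C g f = h" "f \<in> Arr C" "g \<in> Arr C" "Cod C f = Dom C g"
    and "k \<in> Arr C" "Cod C k = Dom C f"
  shows "Comp C g (Comp C f k) = Comp C h k"
  using assms comp_assoc by metis

lemmas arr_simps = comp_arr dom_comp cod_comp comp_assoc comp_id_left comp_id_right
  star_arr dom_star cod_star star_star star_comp

lemma zero_map_in_hom: "zero_map C A B z \<Longrightarrow> z \<in> hom C A B"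
  unfolding zero_map_def by blast

lemma zero_map_comp_left:
  assumes z: "zero_map C A B z" and g: "g \<in> hom C B D"
  shows "zero_map C A D (Comp C g z)"
proof -
  obtain Z a b where Z: "zero_object C Z" "a \<in> hom C A Z" "b \<in> hom C Z B" "z = Comp C b a"
    using z unfolding zero_map_def by blast
  have "Comp C g z = Comp C (Comp C g b) a"
    using Z g by (simp add: arr_simps in_homD)
  moreover have "Comp C g b \<in> hom C Z D" "Comp C g z \<in> hom C A D"
    using Z g z zero_map_in_hom comp_in_hom by blast+
  ultimately show ?thesis
    using Z unfolding zero_map_def by blast
qed

lemma zero_map_comp_right:
  assumes z: "zero_map C A B z" and g: "g \<in> hom C E A"
  shows "zero_map C E B (Comp C z g)"
proof -
  obtain Z a b where Z: "zero_object C Z" "a \<in> hom C A Z" "b \<in> hom C Z B" "z = Comp C b a"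
    using z unfolding zero_map_def by blast
  have "Comp C z g = Comp C b (Comp C a g)"
    using Z g by (simp add: arr_simps in_homD)
  moreover have "Comp C a g \<in> hom C E Z" "Comp C z g \<in> hom C E B"
    using Z g z zero_map_in_hom comp_in_hom by blast+
  ultimately show ?thesis
    using Z unfolding zero_map_def by blast
qed

lemma zero_map_star:
  assumes z: "zero_map C A B z"
  shows "zero_map C B A (Star C z)"
proof -
  obtain Z a b where Z: "zero_object C Z" "a \<in> hom C A Z" "b \<in> hom C Z B" "z = Comp C b a"
    using z unfolding zero_map_def by blast
  have "Star C z = Comp C (Star C a) (Star C b)"
    using Z by (simp add: arr_simps in_homD)
  moreover have "Star C a \<in> hom C Z A" "Star C b \<in> hom C B Z" "Star C z \<in> hom C B A"
    using Z z zero_map_in_hom star_in_hom by blast+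
  ultimately show ?thesis
    using Z unfolding zero_map_def by blast
qed

lemma zero_object_hom_unique:
  assumes "zero_object C Z"
  shows "f \<in> hom C A Z \<Longrightarrow> g \<in> hom C A Z \<Longrightarrow> f = g"
    and "f \<in> hom C Z A \<Longrightarrow> g \<in> hom C Z A \<Longrightarrow> f = g"
proof -
  assume fg: "f \<in> hom C A Z" "g \<in> hom C A Z"
  then have "\<exists>!h. h \<in> hom C A Z"
    using assms in_hom_objs unfolding zero_object_def by blast
  then show "f = g"
    using fg by blast
next
  assume fg: "f \<in> hom C Z A" "g \<in> hom C Z A"
  then have "\<exists>!h. h \<in> hom C Z A"
    using assms in_hom_objs unfolding zero_object_def by blast
  then show "f = g"
    using fg by blast
qed

lemma zero_map_unique:
  assumes z: "zero_map C A B z" and z': "zero_map C A B z'"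
  shows "z = z'"
proof -
  obtain Z a b where Z: "zero_object C Z" "a \<in> hom C A Z" "b \<in> hom C Z B" "z = Comp C b a"
    using z unfolding zero_map_def by blast
  obtain Z' a' b' where Z': "zero_object C Z'" "a' \<in> hom C A Z'" "b' \<in> hom C Z' B"
    "z' = Comp C b' a'"
    using z' unfolding zero_map_def by blast
  obtain c where c: "c \<in> hom C Z Z'"
    using Z Z' in_hom_objs unfolding zero_object_def by metis
  have "Comp C c a = a'"
    using zero_object_hom_unique(1)[OF Z'(1) _ Z'(2)] c Z comp_in_hom by blast
  then have "z' = Comp C (Comp C b' c) a"
    using Z Z' c by (simp add: arr_simps in_homD)
  moreover have "Comp C b' c = b"
    using zero_object_hom_unique(2)[OF Z(1) _ Z(3)] c Z' comp_in_hom by blast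
  ultimately show ?thesis
    using Z by simp
qed

lemma biproductD:
  assumes "biproduct C A B X s1 r1 s2 r2"
  shows "s1 \<in> hom C A X" "r1 \<in> hom C X A" "s2 \<in> hom C B X" "r2 \<in> hom C X B"
    and "Comp C r1 s1 = Id C A" "Comp C r2 s2 = Id C B"
    and "zero_map C A B (Comp C r2 s1)" "zero_map C B A (Comp C r1 s2)"
  using assms unfolding biproduct_def by blast+

lemma biproduct_pair_exists:
  assumes "biproduct C A B X s1 r1 s2 r2" "a \<in> hom C Z A" "b \<in> hom C Z B"
  obtains h where "h \<in> hom C Z X" "Comp C r1 h = a" "Comp C r2 h = b"
  using assms in_hom_objs unfolding biproduct_def by metis

lemma biproduct_copair_exists:
  assumes "biproduct C A B X s1 r1 s2 r2" "a \<in> hom C A Z" "b \<in> hom C B Z"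
  obtains h where "h \<in> hom C X Z" "Comp C h s1 = a" "Comp C h s2 = b"
  using assms in_hom_objs unfolding biproduct_def by metis

lemma biproduct_pair_eqI:
  assumes bp: "biproduct C A B X s1 r1 s2 r2" and h: "h \<in> hom C Z X" "h' \<in> hom C Z X"
    and "Comp C r1 h = Comp C r1 h'" "Comp C r2 h = Comp C r2 h'"
  shows "h = h'"
proof -
  have "Comp C r1 h \<in> hom C Z A" "Comp C r2 h \<in> hom C Z B" "Z \<in> Obj C"
    using biproductD(2,4)[OF bp] h comp_in_hom in_hom_objs by blast+
  then have "\<exists>!k. k \<in> hom C Z X \<and> Comp C r1 k = Comp C r1 h \<and> Comp C r2 k = Comp C r2 h"
    using bp unfolding biproduct_def by blast
  then show ?thesis
    using assms by metis
qed

lemma biproduct_copair_eqI: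
  assumes bp: "biproduct C A B X s1 r1 s2 r2" and h: "h \<in> hom C X Z" "h' \<in> hom C X Z"
    and "Comp C h s1 = Comp C h' s1" "Comp C h s2 = Comp C h' s2"
  shows "h = h'"
proof -
  have "Comp C h s1 \<in> hom C A Z" "Comp C h s2 \<in> hom C B Z" "Z \<in> Obj C"
    using biproductD(1,3)[OF bp] h comp_in_hom in_hom_objs by blast+
  then have "\<exists>!k. k \<in> hom C X Z \<and> Comp C k s1 = Comp C h s1 \<and> Comp C k s2 = Comp C h s2"
    using bp unfolding biproduct_def by blast
  then show ?thesis
    using assms by metis
qed

lemma biproduct_endo_eqI:
  assumes bp: "biproduct C A B W s1 r1 s2 r2" and a: "a \<in> hom C W W" "a' \<in> hom C W W"
    and "Comp C r1 (Comp C a s1) = Comp C r1 (Comp C a' s1)"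
    and "Comp C r2 (Comp C a s1) = Comp C r2 (Comp C a' s1)"
    and "Comp C r1 (Comp C a s2) = Comp C r1 (Comp C a' s2)"
    and "Comp C r2 (Comp C a s2) = Comp C r2 (Comp C a' s2)"
  shows "a = a'"
proof (rule biproduct_copair_eqI[OF bp a])
  show "Comp C a s1 = Comp C a' s1" "Comp C a s2 = Comp C a' s2"
    using assms biproductD(1,3)[OF bp] comp_in_hom
    by (meson biproduct_pair_eqI[OF bp])+
qed

lemma biproduct_copair_proj:
  assumes bQ: "biproduct C Y D Q q1 r1 q2 r2" and bP: "biproduct C A B P i1 p1 i2 p2"
    and a: "a \<in> hom C Y A" and b: "b \<in> hom C D B" and phi: "phi \<in> hom C Q P"
    and phi_q: "Comp C phi q1 = Comp C i1 a" "Comp C phi q2 = Comp C i2 b"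
  shows "Comp C p1 phi = Comp C a r1" "Comp C p2 phi = Comp C b r2"
proof -
  note Q = biproductD[OF bQ] and P = biproductD[OF bP]
  note types = in_homD[OF Q(1)] in_homD[OF Q(2)] in_homD[OF Q(3)] in_homD[OF Q(4)]
    in_homD[OF P(1)] in_homD[OF P(2)] in_homD[OF P(3)] in_homD[OF P(4)]
    in_homD[OF a] in_homD[OF b] in_homD[OF phi]
  show "Comp C p1 phi = Comp C a r1"
  proof (rule biproduct_copair_eqI[OF bQ])
    show "Comp C p1 phi \<in> hom C Q A" "Comp C a r1 \<in> hom C Q A"
      using P Q a phi comp_in_hom by blast+
    show "Comp C (Comp C p1 phi) q1 = Comp C (Comp C a r1) q1"
      using phi_q P(5) Q(5) types by (simp add: arr_simps comp_eq_comp_right[OF P(5)])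
    have "zero_map C D A (Comp C (Comp C p1 i2) b)" "zero_map C D A (Comp C a (Comp C r1 q2))"
      using zero_map_comp_right[OF P(8) b] zero_map_comp_left[OF Q(8) a] .
    then show "Comp C (Comp C p1 phi) q2 = Comp C (Comp C a r1) q2"
      using zero_map_unique phi_q types by (simp add: arr_simps)
  qed
  show "Comp C p2 phi = Comp C b r2"
  proof (rule biproduct_copair_eqI[OF bQ])
    show "Comp C p2 phi \<in> hom C Q B" "Comp C b r2 \<in> hom C Q B"
      using P Q b phi comp_in_hom by blast+
    show "Comp C (Comp C p2 phi) q2 = Comp C (Comp C b r2) q2"
      using phi_q P(6) Q(6) types by (simp add: arr_simps comp_eq_comp_right[OF P(6)])
    have "zero_map C Y B (Comp C (Comp C p2 i1) a)" "zero_map C Y B (Comp C b (Comp C r2 q1))"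
      using zero_map_comp_right[OF P(7) a] zero_map_comp_left[OF Q(7) b] .
    then show "Comp C (Comp C p2 phi) q1 = Comp C (Comp C b r2) q1"
      using zero_map_unique phi_q types by (simp add: arr_simps)
  qed
qed

text \<open>This is \<open>q\<^sub>1 q\<^sub>1\<^sup>* + q\<^sub>2 q\<^sub>2\<^sup>* = 1\<close>, sandwiched between \<open>s\<^sup>*\<close> and \<open>t\<close>.\<close>
lemma biproduct_star_comp_is_sum:
  assumes bQ: "biproduct C Y D Q q1 (Star C q1) q2 (Star C q2)"
    and s: "s \<in> hom C X Q" and t: "t \<in> hom C X' Q"
    and sum: "is_sum C (Comp C (Star C s) (Comp C (Comp C q1 (Star C q1)) t))
                       (Comp C (Star C s) (Comp C (Comp C q2 (Star C q2)) t)) h"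
  shows "h = Comp C (Star C s) t"
proof -
  note Q = biproductD[OF bQ]
  note types = in_homD[OF Q(1)] in_homD[OF Q(2)] in_homD[OF Q(3)] in_homD[OF Q(4)]
    in_homD[OF s] in_homD[OF t]
  define a where "a = Comp C (Star C s) (Comp C (Comp C q1 (Star C q1)) t)"
  define b where "b = Comp C (Star C s) (Comp C (Comp C q2 (Star C q2)) t)"
  have "Dom C a = X'" "Cod C a = X"
    unfolding a_def using types by (simp_all add: arr_simps)
  then obtain P i1 p1 i2 p2 u n where bP: "biproduct C X X P i1 p1 i2 p2"
    and u: "u \<in> hom C X' P" "Comp C p1 u = a" "Comp C p2 u = b"
    and n: "n \<in> hom C P X" "Comp C n i1 = Id C X" "Comp C n i2 = Id C X" and h: "h = Comp C n u"
    using sum[folded a_def b_def] unfolding is_sum_def by metis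
  note P = biproductD[OF bP]
  have sq: "Comp C (Star C s) q1 \<in> hom C Y X" "Comp C (Star C s) q2 \<in> hom C D X"
    using s Q star_in_hom comp_in_hom by blast+
  obtain phi where phi: "phi \<in> hom C Q P" "Comp C phi q1 = Comp C i1 (Comp C (Star C s) q1)"
    "Comp C phi q2 = Comp C i2 (Comp C (Star C s) q2)"
    using biproduct_copair_exists[OF bQ comp_in_hom[OF sq(1) P(1)] comp_in_hom[OF sq(2) P(3)]] .
  note proj = biproduct_copair_proj[OF bQ bP sq phi]
  note types = types in_homD[OF P(1)] in_homD[OF P(2)] in_homD[OF P(3)] in_homD[OF P(4)]
    in_homD[OF phi(1)] in_homD[OF u(1)] in_homD[OF n(1)]
  have "Comp C phi t = u"
  proof (rule biproduct_pair_eqI[OF bP])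
    show "Comp C phi t \<in> hom C X' P" "u \<in> hom C X' P"
      using phi t u comp_in_hom by blast+
    show "Comp C p1 (Comp C phi t) = Comp C p1 u" "Comp C p2 (Comp C phi t) = Comp C p2 u"
      using proj u types unfolding a_def b_def by (simp_all add: arr_simps flip: comp_assoc)
  qed
  moreover have "Star C s = Comp C n phi"
  proof (rule biproduct_copair_eqI[OF bQ])
    show "Star C s \<in> hom C Q X" "Comp C n phi \<in> hom C Q X"
      using s n phi star_in_hom comp_in_hom by blast+
    show "Comp C (Star C s) q1 = Comp C (Comp C n phi) q1"
      "Comp C (Star C s) q2 = Comp C (Comp C n phi) q2"
      using phi types
      by (simp_all add: arr_simps comp_eq_comp_right[OF n(2)] comp_eq_comp_right[OF n(3)])
  qed
  ultimately show ?thesis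
    using h types by (simp add: arr_simps)
qed

lemma kernelD:
  assumes k: "kernel C f k" and f: "f \<in> hom C A B"
  shows "k \<in> hom C (Dom C k) A" "zero_map C (Dom C k) B (Comp C f k)"
proof -
  have "k \<in> Arr C" "Cod C k = Dom C f" "zero_map C (Dom C k) (Cod C f) (Comp C f k)"
    using k unfolding kernel_def by blast+
  then show "k \<in> hom C (Dom C k) A" "zero_map C (Dom C k) B (Comp C f k)"
    using in_homD[OF f] unfolding hom_def by simp_all
qed

lemma kernel_factor:
  assumes k: "kernel C f k" and f: "f \<in> hom C A B"
    and g: "g \<in> hom C Z A" and fg: "zero_map C Z B (Comp C f g)"
  obtains h where "h \<in> hom C Z (Dom C k)" "Comp C k h = g"
proof -
  have "\<forall>g\<in>Arr C. Cod C g = Dom C f \<longrightarrow> zero_map C (Dom C g) (Cod C f) (Comp C f g) \<longrightarrow>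
      (\<exists>!h. h \<in> hom C (Dom C g) (Dom C k) \<and> Comp C k h = g)"
    using k unfolding kernel_def by blast
  moreover have "g \<in> Arr C" "Cod C g = Dom C f" "zero_map C (Dom C g) (Cod C f) (Comp C f g)"
    using in_homD[OF f] in_homD[OF g] fg by simp_all
  ultimately have "\<exists>!h. h \<in> hom C (Dom C g) (Dom C k) \<and> Comp C k h = g"
    by blast
  then show ?thesis
    using that in_homD[OF g] by auto
qed

lemma epiD:
  assumes "epi C m" "m \<in> hom C W S" "u \<in> hom C S B" "v \<in> hom C S B"
    and "Comp C u m = Comp C v m"
  shows "u = v"
  using assms unfolding epi_def hom_def by blast

lemma epi_star_cancel:
  assumes m: "epi C m" "m \<in> hom C W S" and ab: "a \<in> hom C V S" "b \<in> hom C V S"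
    and eq: "Comp C (Star C m) a = Comp C (Star C m) b"
  shows "a = b"
proof -
  have "Comp C (Star C a) m = Comp C (Star C b) m"
    using arg_cong[OF eq, of "Star C"] m ab by (simp add: arr_simps in_homD)
  then have "Star C a = Star C b"
    using epiD[OF m] ab star_in_hom by blast
  then show ?thesis
    using ab in_homD star_star by metis
qed

lemma codilationD:
  assumes "codilation C f T t1 t2"
  shows "f \<in> hom C (Dom C f) (Cod C f)" "t1 \<in> hom C (Dom C f) T" "t2 \<in> hom C (Cod C f) T"
    and "Comp C (Star C t1) t1 = Id C (Dom C f)" "Comp C (Star C t2) t2 = Id C (Cod C f)"
    and "Comp C (Star C t2) t1 = f"
  using assms unfolding codilation_def isometry_def hom_def by auto

lemma codilation_through_isometry:
  assumes T: "codilation C f T (Comp C e s1) (Comp C e s2)"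
    and e: "isometry C e" "e \<in> hom C S T"
    and s: "s1 \<in> hom C (Dom C f) S" "s2 \<in> hom C (Cod C f) S"
  shows "codilation C f S s1 s2"
proof -
  have ee: "Comp C (Star C (Comp C e a)) (Comp C e b) = Comp C (Star C a) b"
    if "a \<in> hom C A S" "b \<in> hom C B S" for a b A B
    using e that unfolding isometry_def
    by (simp add: arr_simps in_homD comp_eq_comp_right[of "Star C e" e])
  note T' = codilationD[OF T]
  have "Comp C (Star C s1) s1 = Id C (Dom C f)" "Comp C (Star C s2) s2 = Id C (Cod C f)"
    "Comp C (Star C s2) s1 = f"
    using ee[OF s(1) s(1)] ee[OF s(2) s(2)] ee[OF s(2) s(1)] T'(4-6) by simp_all
  then show ?thesis
    using in_homD[OF T'(1)] s in_homD[OF s(1)] in_homD[OF s(2)] in_hom_objs[OF s(1)]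
    unfolding codilation_def isometry_def by simp
qed

lemma star_comp_swap:
  assumes "a \<in> hom C A V" "b \<in> hom C B V"
  shows "Comp C (Star C a) b = Star C (Comp C (Star C b) a)"
  using in_homD[OF assms(1)] in_homD[OF assms(2)] by (simp add: arr_simps)

lemma douglian_factor:
  assumes "douglian_morphism C m" "m \<in> hom C W S" "n \<in> hom C W T"
    and "Comp C (Star C n) n = Comp C (Star C m) m"
  obtains h where "h \<in> hom C S T" "Comp C h m = n"
proof -
  have "\<forall>g\<in>Arr C. Dom C g = Dom C m \<longrightarrow> Comp C (Star C g) g = Comp C (Star C m) m \<longrightarrow>
      (\<exists>h. h \<in> hom C (Cod C m) (Cod C g) \<and> Comp C h m = g)"
    using assms(1) unfolding douglian_morphism_def by blast
  moreover have "n \<in> Arr C" "Dom C n = Dom C m"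
    using in_homD[OF assms(2)] in_homD[OF assms(3)] by simp_all
  ultimately have "\<exists>h. h \<in> hom C (Cod C m) (Cod C n) \<and> Comp C h m = n"
    using assms(4) by blast
  then show ?thesis
    using that in_homD[OF assms(2)] in_homD[OF assms(3)] by auto
qed

lemma codilation_copairing_gram:
  assumes bW: "biproduct C (Dom C f) (Cod C f) W j1 (Star C j1) j2 (Star C j2)"
    and m: "m \<in> hom C W S" "codilation C f S (Comp C m j1) (Comp C m j2)"
    and n: "n \<in> hom C W T" "codilation C f T (Comp C n j1) (Comp C n j2)"
  shows "Comp C (Star C m) m = Comp C (Star C n) n"
proof -
  note J = biproductD[OF bW] and M = codilationD[OF m(2)] and N = codilationD[OF n(2)]
  have gram: "Comp C (Star C a) (Comp C (Comp C (Star C p) p) b) =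
      Comp C (Star C (Comp C p a)) (Comp C p b)"
    if "p \<in> hom C W V" "a \<in> hom C A W" "b \<in> hom C B W" for p a b A B V
    using in_homD[OF that(1)] in_homD[OF that(2)] in_homD[OF that(3)] by (simp add: arr_simps)
  show ?thesis
  proof (rule biproduct_endo_eqI[OF bW])
    show "Comp C (Star C m) m \<in> hom C W W" "Comp C (Star C n) n \<in> hom C W W"
      using m n star_in_hom comp_in_hom by blast+
    show "Comp C (Star C j1) (Comp C (Comp C (Star C m) m) j1) =
        Comp C (Star C j1) (Comp C (Comp C (Star C n) n) j1)"
      by (simp only: gram[OF m(1) J(1) J(1)] gram[OF n(1) J(1) J(1)] M(4) N(4))
    show "Comp C (Star C j2) (Comp C (Comp C (Star C m) m) j1) =
        Comp C (Star C j2) (Comp C (Comp C (Star C n) n) j1)"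
      by (simp only: gram[OF m(1) J(3) J(1)] gram[OF n(1) J(3) J(1)] M(6) N(6))
    show "Comp C (Star C j1) (Comp C (Comp C (Star C m) m) j2) =
        Comp C (Star C j1) (Comp C (Comp C (Star C n) n) j2)"
      by (simp only: gram[OF m(1) J(1) J(3)] gram[OF n(1) J(1) J(3)]
          star_comp_swap[OF M(2) M(3)] star_comp_swap[OF N(2) N(3)] M(6) N(6))
    show "Comp C (Star C j2) (Comp C (Comp C (Star C m) m) j2) =
        Comp C (Star C j2) (Comp C (Comp C (Star C n) n) j2)"
      by (simp only: gram[OF m(1) J(3) J(3)] gram[OF n(1) J(3) J(3)] M(5) N(5))
  qed
qed

lemma codilator_if_epi_copairing:
  assumes bW: "biproduct C (Dom C f) (Cod C f) W j1 (Star C j1) j2 (Star C j2)"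
    and m: "m \<in> hom C W S" "epi C m" "douglian_morphism C m"
    and S: "codilation C f S (Comp C m j1) (Comp C m j2)"
  shows "codilator C f S (Comp C m j1) (Comp C m j2)"
  unfolding codilator_def
proof (intro conjI allI impI S)
  fix T t1 t2
  assume T: "codilation C f T t1 t2"
  note J = biproductD[OF bW] and T' = codilationD[OF T]
  obtain n where n: "n \<in> hom C W T" "Comp C n j1 = t1" "Comp C n j2 = t2"
    using biproduct_copair_exists[OF bW T'(2) T'(3)] .
  have "Comp C (Star C n) n = Comp C (Star C m) m"
    using codilation_copairing_gram[OF bW m(1) S n(1)] T n by simp
  then obtain h where h: "h \<in> hom C S T" "Comp C h m = n"
    using douglian_factor[OF m(3) m(1) n(1)] by blast
  note types = in_homD[OF m(1)] in_homD[OF n(1)] in_homD[OF h(1)] in_homD[OF J(1)] in_homD[OF J(3)]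
  have "Comp C (Star C m) (Comp C (Comp C (Star C h) h) m) = Comp C (Star C (Comp C h m)) (Comp C h m)"
    using types by (simp add: arr_simps)
  also have "\<dots> = Comp C (Star C m) (Comp C (Id C S) m)"
    using h(2) \<open>Comp C (Star C n) n = Comp C (Star C m) m\<close> types by (simp add: arr_simps)
  finally have "Comp C (Comp C (Star C h) h) m = Comp C (Id C S) m"
    using epi_star_cancel[OF m(2,1)] h(1) m(1) star_in_hom comp_in_hom id_in_hom in_hom_objs
    by meson
  then have iso: "Comp C (Star C h) h = Id C S"
    using epiD[OF m(2,1)] h(1) star_in_hom comp_in_hom id_in_hom in_hom_objs by meson
  show "\<exists>!t. t \<in> hom C S T \<and> isometry C t \<and> Comp C t (Comp C m j1) = t1 \<and> Comp C t (Comp C m j2) = t2"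
  proof (rule ex1I[of _ h])
    show "h \<in> hom C S T \<and> isometry C h \<and> Comp C h (Comp C m j1) = t1 \<and> Comp C h (Comp C m j2) = t2"
      using h iso n types unfolding isometry_def by (simp add: comp_eq_comp_right[OF h(2)])
    fix t
    assume t: "t \<in> hom C S T \<and> isometry C t \<and> Comp C t (Comp C m j1) = t1 \<and> Comp C t (Comp C m j2) = t2"
    then have t_hom: "t \<in> hom C S T"
      by blast
    have "Comp C t m = Comp C h m"
    proof (rule biproduct_copair_eqI[OF bW])
      show "Comp C t m \<in> hom C W T" "Comp C h m \<in> hom C W T"
        using t_hom h(1) m(1) comp_in_hom by blast+
      show "Comp C (Comp C t m) j1 = Comp C (Comp C h m) j1" "Comp C (Comp C t m) j2 = Comp C (Comp C h m) j2"
        using t h(2) n in_homD[OF t_hom] types by (simp_all add: arr_simps)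
    qed
    then show "t = h"
      using epiD[OF m(2,1) t_hom h(1)] by blast
  qed
qed

end

locale pre_hilbert = star_cat +
  assumes pre_hilbert: "pre_hilbert_star_category C"
begin

lemma orthonormal_biproduct_exists:
  assumes "A \<in> Obj C" "B \<in> Obj C"
  obtains X s1 s2 where "biproduct C A B X s1 (Star C s1) s2 (Star C s2)"
proof -
  have "\<forall>A\<in>Obj C. \<forall>B\<in>Obj C. \<exists>X s1 r1 s2 r2. orthonormal_biproduct C A B X s1 r1 s2 r2"
    using pre_hilbert unfolding pre_hilbert_star_category_def by blast
  then show ?thesis
    using assms that unfolding orthonormal_biproduct_def by blast
qed

lemma isometric_kernel_exists:
  assumes "f \<in> Arr C"
  obtains k where "kernel C f k" "isometry C k"
proof -
  have "\<forall>f\<in>Arr C. \<exists>k. kernel C f k \<and> isometry C k"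
    using pre_hilbert unfolding pre_hilbert_star_category_def by blast
  then show ?thesis
    using assms that by blast
qed

lemma diagonal_is_kernel:
  assumes "biproduct C X X P s1 (Star C s1) s2 (Star C s2)" "d \<in> hom C X P"
    and "Comp C (Star C s1) d = Id C X" "Comp C (Star C s2) d = Id C X"
  obtains g where "kernel C g d"
proof -
  have "\<forall>X P s1 r1 s2 r2 d. orthonormal_biproduct C X X P s1 r1 s2 r2 \<and>
      d \<in> hom C X P \<and> Comp C r1 d = Id C X \<and> Comp C r2 d = Id C X \<longrightarrow> (\<exists>g. kernel C g d)"
    using pre_hilbert unfolding pre_hilbert_star_category_def by blast
  then show ?thesis
    using assms that unfolding orthonormal_biproduct_def by blast
qed

text \<open>If \<open>u m = v m\<close> then \<open>\<langle>u, v\<rangle> m\<close> factors through the diagonal, which is a kernel of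
  some \<open>g\<close>; cancelling \<open>m\<close> in \<open>g \<langle>u, v\<rangle> m = 0\<close> makes \<open>\<langle>u, v\<rangle>\<close> factor through the diagonal.\<close>
lemma epiI_zero_cancelling:
  assumes m: "m \<in> hom C W S"
    and cancel: "\<And>Z u. u \<in> hom C S Z \<Longrightarrow> zero_map C W Z (Comp C u m) \<Longrightarrow> zero_map C S Z u"
  shows "epi C m"
  unfolding epi_def
proof (intro conjI allI impI)
  show "m \<in> Arr C"
    using in_homD[OF m] by blast
  fix B u v
  assume "u \<in> hom C (Cod C m) B" "v \<in> hom C (Cod C m) B" and uv: "Comp C u m = Comp C v m"
  then have u: "u \<in> hom C S B" and v: "v \<in> hom C S B"
    using in_homD[OF m] by simp_all
  have Bo: "B \<in> Obj C"
    using in_hom_objs[OF u] by blast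
  obtain BB b1 b2 where bB: "biproduct C B B BB b1 (Star C b1) b2 (Star C b2)"
    using orthonormal_biproduct_exists[OF Bo Bo] by blast
  obtain d where d: "d \<in> hom C B BB" "Comp C (Star C b1) d = Id C B" "Comp C (Star C b2) d = Id C B"
    using biproduct_pair_exists[OF bB id_in_hom[OF Bo] id_in_hom[OF Bo]] .
  obtain g where g: "kernel C g d"
    using diagonal_is_kernel[OF bB d] .
  have g_hom: "g \<in> hom C BB (Cod C g)"
    using g in_homD[OF d(1)] unfolding kernel_def hom_def by auto
  obtain w where w: "w \<in> hom C S BB" "Comp C (Star C b1) w = u" "Comp C (Star C b2) w = v"
    using biproduct_pair_exists[OF bB u v] .
  note B = biproductD[OF bB]
  note types = in_homD[OF m] in_homD[OF u] in_homD[OF v] in_homD[OF d(1)] in_homD[OF w(1)]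
    in_homD[OF B(1)] in_homD[OF B(3)] in_homD[OF g_hom]
  have "Comp C w m = Comp C d (Comp C u m)"
  proof (rule biproduct_pair_eqI[OF bB])
    show "Comp C w m \<in> hom C W BB" "Comp C d (Comp C u m) \<in> hom C W BB"
      using m u d(1) w(1) comp_in_hom by blast+
    show "Comp C (Star C b1) (Comp C w m) = Comp C (Star C b1) (Comp C d (Comp C u m))"
      "Comp C (Star C b2) (Comp C w m) = Comp C (Star C b2) (Comp C d (Comp C u m))"
      using uv types
      by (simp_all add: arr_simps comp_eq_comp_right[OF w(2)] comp_eq_comp_right[OF w(3)]
          comp_eq_comp_right[OF d(2)] comp_eq_comp_right[OF d(3)])
  qed
  then have wm: "Comp C (Comp C g w) m = Comp C (Comp C g d) (Comp C u m)"
    using types by (simp add: arr_simps)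
  have "zero_map C B (Cod C g) (Comp C g d)"
    using kernelD(2)[OF g g_hom] in_homD[OF d(1)] by simp
  from zero_map_comp_right[OF this comp_in_hom[OF m u]]
  have "zero_map C W (Cod C g) (Comp C (Comp C g w) m)"
    unfolding wm .
  then have "zero_map C S (Cod C g) (Comp C g w)"
    using cancel comp_in_hom[OF w(1) g_hom] by blast
  then obtain x where x: "x \<in> hom C S (Dom C d)" "Comp C d x = w"
    using kernel_factor[OF g g_hom w(1)] by blast
  note types = types in_homD[OF x(1)]
  have "Comp C (Star C b1) (Comp C d x) = x" "Comp C (Star C b2) (Comp C d x) = x"
    using types by (simp_all add: arr_simps comp_eq_comp_right[OF d(2)] comp_eq_comp_right[OF d(3)])
  then show "u = v"
    using w(2,3) x(2) by simp
qed

lemma isometric_image_factorization: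
  assumes m: "m \<in> hom C W Q"
  obtains S e m' where "isometry C e" "e \<in> hom C S Q" "m' \<in> hom C W S" "Comp C e m' = m"
    and "\<And>Z u. u \<in> hom C S Z \<Longrightarrow> zero_map C W Z (Comp C u m') \<Longrightarrow> zero_map C S Z u"
proof -
  have ms: "Star C m \<in> hom C Q W"
    using m star_in_hom by blast
  obtain k where k: "kernel C (Star C m) k"
    using isometric_kernel_exists in_homD[OF ms] by blast
  define K where "K = Dom C k"
  have kK: "k \<in> hom C K Q" and mk: "zero_map C K W (Comp C (Star C m) k)"
    using kernelD[OF k ms] unfolding K_def by blast+
  have ks: "Star C k \<in> hom C Q K"
    using kK star_in_hom by blast
  obtain e where e: "kernel C (Star C k) e" "isometry C e"
    using isometric_kernel_exists in_homD[OF ks] by blast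
  define S where "S = Dom C e"
  have eS: "e \<in> hom C S Q" and ke: "zero_map C S K (Comp C (Star C k) e)"
    using kernelD[OF e(1) ks] unfolding S_def by blast+
  note types = in_homD[OF m] in_homD[OF kK] in_homD[OF eS]
  have ee: "Comp C (Star C e) e = Id C S"
    using e(2) unfolding isometry_def S_def by blast
  have "zero_map C W K (Comp C (Star C k) m)"
    using zero_map_star[OF mk] types by (simp add: arr_simps)
  then obtain m' where m': "m' \<in> hom C W S" "Comp C e m' = m"
    using kernel_factor[OF e(1) ks m] unfolding S_def by blast
  show ?thesis
  proof (rule that[OF e(2) eS m'])
    fix Z u
    assume u: "u \<in> hom C S Z" and um: "zero_map C W Z (Comp C u m')"
    note types = types in_homD[OF m'(1)] in_homD[OF u]
    have eu: "Comp C e (Star C u) \<in> hom C Z Q"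
      using u eS star_in_hom comp_in_hom by blast
    have "Comp C (Star C m) (Comp C e (Star C u)) = Star C (Comp C u m')"
      using types by (simp add: arr_simps comp_eq_comp_right[OF ee] flip: m'(2))
    then have "zero_map C Z W (Comp C (Star C m) (Comp C e (Star C u)))"
      using zero_map_star[OF um] by simp
    then obtain w where w: "w \<in> hom C Z K" "Comp C k w = Comp C e (Star C u)"
      using kernel_factor[OF k ms eu] unfolding K_def by blast
    have "Star C u = Comp C (Star C e) (Comp C e (Star C u))"
      using types by (simp add: arr_simps comp_eq_comp_right[OF ee])
    also have "\<dots> = Comp C (Star C (Comp C (Star C k) e)) w"
      using in_homD[OF w(1)] types by (simp add: arr_simps flip: w(2))
    finally have "zero_map C Z S (Star C u)"
      using zero_map_comp_right[OF zero_map_star[OF ke] w(1)] by simp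
    from zero_map_star[OF this] show "zero_map C S Z u"
      using types by (simp add: arr_simps)
  qed
qed

lemma image_factorization_epi:
  assumes "m \<in> hom C W Q"
  obtains S e m' where "isometry C e" "e \<in> hom C S Q" "m' \<in> hom C W S" "Comp C e m' = m"
    "epi C m'"
  using isometric_image_factorization[OF assms] epiI_zero_cancelling by metis

lemma contraction_has_codilation:
  assumes "contraction C f"
  obtains Q t1 t2 where "codilation C f Q t1 t2"
proof -
  define X Y where "X = Dom C f" and "Y = Cod C f"
  have f: "f \<in> hom C X Y"
    using assms unfolding contraction_def X_def Y_def hom_def by blast
  have "Dom C (Comp C (Star C f) f) = X"
    using in_homD[OF f] by (simp add: arr_simps)
  then obtain y where y: "y \<in> Arr C" "Dom C y = X"
    and sum: "is_sum C (Comp C (Star C f) f) (Comp C (Star C y) y) (Id C X)"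
    using assms unfolding contraction_def herm_le_def X_def by metis
  define D where "D = Cod C y"
  have y: "y \<in> hom C X D"
    using y unfolding D_def hom_def by blast
  obtain Q q1 q2 where bQ: "biproduct C Y D Q q1 (Star C q1) q2 (Star C q2)"
    using orthonormal_biproduct_exists in_hom_objs[OF f] in_hom_objs[OF y] by metis
  note Q = biproductD[OF bQ]
  obtain t1 where t1: "t1 \<in> hom C X Q" "Comp C (Star C q1) t1 = f" "Comp C (Star C q2) t1 = y"
    using biproduct_pair_exists[OF bQ f y] .
  note types = in_homD[OF t1(1)] in_homD[OF Q(1)] in_homD[OF Q(3)]
  have "Comp C (Star C f) f = Comp C (Star C t1) (Comp C (Comp C q1 (Star C q1)) t1)"
    "Comp C (Star C y) y = Comp C (Star C t1) (Comp C (Comp C q2 (Star C q2)) t1)"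
    using types by (simp_all add: arr_simps flip: t1(2,3))
  then have "Id C X = Comp C (Star C t1) t1"
    using biproduct_star_comp_is_sum[OF bQ t1(1) t1(1)] sum by simp
  then have "codilation C f Q t1 q1"
    using t1 Q(1,5) in_hom_objs[OF t1(1)] in_homD[OF f] types
    unfolding codilation_def isometry_def X_def Y_def by simp
  then show ?thesis
    using that by blast
qed

lemma codilation_with_epi_copairing:
  assumes T: "codilation C f T t1 t2"
    and bW: "biproduct C (Dom C f) (Cod C f) W j1 r1 j2 r2"
  obtains S m where "m \<in> hom C W S" "epi C m" "codilation C f S (Comp C m j1) (Comp C m j2)"
proof -
  note J = biproductD[OF bW] and T' = codilationD[OF T]
  obtain n where n: "n \<in> hom C W T" "Comp C n j1 = t1" "Comp C n j2 = t2"
    using biproduct_copair_exists[OF bW T'(2) T'(3)] .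
  obtain S e m where e: "isometry C e" "e \<in> hom C S T"
    and m: "m \<in> hom C W S" "Comp C e m = n" "epi C m"
    using image_factorization_epi[OF n(1)] .
  have "Comp C e (Comp C m j1) = t1" "Comp C e (Comp C m j2) = t2"
    using n in_homD[OF e(2)] in_homD[OF m(1)] in_homD[OF J(1)] in_homD[OF J(3)]
    by (simp_all add: arr_simps flip: m(2))
  then have "codilation C f S (Comp C m j1) (Comp C m j2)"
    using codilation_through_isometry[OF _ e] T m(1) J(1,3) comp_in_hom by metis
  then show ?thesis
    using that m by blast
qed

end

theorem corollary7p17:
  fixes C :: "('o, 'm) starcat" and f :: 'm
  assumes "douglian_pre_hilbert_star_category C"
    and "contraction C f"
  shows "\<exists>S s1 s2. codilator C f S s1 s2"
proof -
  have ph: "pre_hilbert_star_category C" and douglian: "\<forall>m\<in>Arr C. douglian_morphism C m"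
    using assms(1) unfolding douglian_pre_hilbert_star_category_def by blast+
  interpret pre_hilbert C
    using ph by unfold_locales (simp_all add: pre_hilbert_star_category_def)
  obtain T t1 t2 where T: "codilation C f T t1 t2"
    using contraction_has_codilation[OF assms(2)] .
  obtain W j1 j2 where bW: "biproduct C (Dom C f) (Cod C f) W j1 (Star C j1) j2 (Star C j2)"
    using orthonormal_biproduct_exists codilationD(2,3)[OF T] in_hom_objs by metis
  obtain S m where m: "m \<in> hom C W S" "epi C m" "codilation C f S (Comp C m j1) (Comp C m j2)"
    using codilation_with_epi_copairing[OF T bW] .
  have "codilator C f S (Comp C m j1) (Comp C m j2)"
    using codilator_if_epi_copairing[OF bW m(1,2) _ m(3)] douglian in_homD[OF m(1)] by blast
  then show ?thesis
    by blast
qed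

end
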